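(* Let $f\in\mathcal A$ be such that $$\frac{z}{f(z)}=1+b_1z+\sum_{n=2}^\infty(-1)^nb_nz^n,\qquad z\in\mathbb D,$$ where $b_1\in\mathbb C$ and $b_n\ge0$ for $n\ge2$. Then $f$ is univalent in $\mathbb D$ if and only if $\sum_{n=2}^\infty(n-1)b_n\le 1$.
   Context: $\mathbb D=\{z\in\mathbb C:|z|<1\}$. $\mathcal A$ is the class of functions $f$ analytic in $\mathbb D$ with $f(z)=z+\sum_{k\ge2}a_kz^k$. *)

theory Defs
  imports "HOL-Complex_Analysis.Complex_Analysis"
begin

definition class_A :: "(complex \<Rightarrow> complex) \<Rightarrow> bool" where
  "class_A f \<longleftrightarrow> f holomorphic_on ball 0 1 \<and> f 0 = 0 \<and> deriv f 0 = 1"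

end

theory Submission
  imports Defs
begin

(*
  Write 1/f(z) = 1/z + b1 + h(z) with h(z) = \<Sum> c_m z^(m+1). If \<Sum> (m+1)|c_m| \<le> 1, then h is
  1-Lipschitz on the disc, whereas |1/z - 1/w| > |z - w| for distinct z, w in the disc; hence
  f(z) = f(w) forces z = w.

  Conversely, for c_m = (-1)^m b_(m+2) with b_n \<ge> 0, the function
  \<psi>(x) = b1 - 1/f(-x) = (1 + \<Sum> b_n x^n)/x is real and continuous on (0,1) and tends to +\<infinity>
  at 0. If f is univalent, \<psi> is injective, hence strictly decreasing. But if
  \<Sum> (n-1) b_n > 1, some partial sum \<Sum>_(n\<le>N) (n-1) b_n s^n exceeds 1 for s close to 1,
  and then \<psi>(s) \<le> \<psi>(t) for t = (s+1)/2.
*)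

lemma power_diff_ge:
  fixes s t :: real
  assumes "0 \<le> s" "s \<le> t"
  shows "real (Suc k) * s ^ k * (t - s) \<le> t ^ Suc k - s ^ Suc k"
proof -
  have "real (Suc k) * s ^ k = (\<Sum>i<Suc k. s ^ (k - i) * s ^ i)"
    by (simp flip: power_add)
  also have "\<dots> \<le> (\<Sum>i<Suc k. s ^ (k - i) * t ^ i)"
    using assms by (intro sum_mono mult_left_mono power_mono) auto
  finally have "real (Suc k) * s ^ k * (t - s) \<le> (t - s) * (\<Sum>i<Suc k. s ^ (k - i) * t ^ i)"
    using assms by (simp add: mult.commute mult_left_mono)
  also have "\<dots> = t ^ Suc k - s ^ Suc k"
    by (simp only: power_diff_sumr2 diff_Suc_Suc)
  finally show ?thesis .
qed

lemma powser_cross_difference_ge: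
  fixes a :: "nat \<Rightarrow> real"
  assumes a: "\<And>m. 0 \<le> a m" and st: "0 \<le> s" "s \<le> t"
    and Ps: "(\<lambda>m. a m * s ^ (m + 2)) sums Ps" and Pt: "(\<lambda>m. a m * t ^ (m + 2)) sums Pt"
  shows "(t - s) * (\<Sum>m<N. real (m + 1) * a m * s ^ (m + 2)) \<le> s * Pt - t * Ps"
proof -
  define d where "d m = s * t * a m * (t ^ Suc m - s ^ Suc m)" for m
  have "(\<lambda>m. s * (a m * t ^ (m + 2)) - t * (a m * s ^ (m + 2))) sums (s * Pt - t * Ps)"
    using Ps Pt by (intro sums_diff sums_mult)
  moreover have "d = (\<lambda>m. s * (a m * t ^ (m + 2)) - t * (a m * s ^ (m + 2)))"
    by (simp add: fun_eq_iff d_def algebra_simps)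
  ultimately have d_sums: "d sums (s * Pt - t * Ps)"
    by simp
  have d_nonneg: "0 \<le> d m" for m
    using a[of m] st power_mono[OF st(2,1), of "Suc m"] by (simp add: d_def)
  have "(t - s) * (\<Sum>m<N. real (m + 1) * a m * s ^ (m + 2))
      = (\<Sum>m<N. s * s * a m * (real (Suc m) * s ^ m * (t - s)))"
    by (simp add: sum_distrib_left algebra_simps power2_eq_square)
  also have "\<dots> \<le> (\<Sum>m<N. d m)"
  proof (intro sum_mono)
    fix m
    have "s * s * a m * (real (Suc m) * s ^ m * (t - s))
        \<le> s * t * a m * (real (Suc m) * s ^ m * (t - s))"
      using a[of m] st by (intro mult_right_mono mult_left_mono) auto
    also have "\<dots> \<le> d m"
      unfolding d_def using a[of m] st power_diff_ge[OF st] by (intro mult_left_mono) auto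
    finally show "s * s * a m * (real (Suc m) * s ^ m * (t - s)) \<le> d m" .
  qed
  also have "\<dots> \<le> s * Pt - t * Ps"
    using sum_le_suminf[OF sums_summable[OF d_sums]] d_nonneg sums_unique[OF d_sums] by auto
  finally show ?thesis .
qed

lemma continuous_on_shifted_powser_unit_interval:
  fixes a :: "nat \<Rightarrow> real"
  assumes P: "\<And>x. 0 < x \<Longrightarrow> x < 1 \<Longrightarrow> (\<lambda>m. a m * x ^ (m + k)) sums P x"
  shows "continuous_on {0<..<1} P"
proof -
  have summable: "summable (\<lambda>m. a m * x ^ m)" if "0 < x" "x < 1" for x
  proof -
    have "summable (\<lambda>m. a m * x ^ (m + k) / x ^ k)"
      using P[OF that] by (intro summable_divide sums_summable)
    then show ?thesis
      using that by (simp add: power_add)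
  qed
  have P_eq: "P x = x ^ k * (\<Sum>m. a m * x ^ m)" if "0 < x" "x < 1" for x
  proof -
    have "(\<lambda>m. x ^ k * (a m * x ^ m)) sums (x ^ k * (\<Sum>m. a m * x ^ m))"
      using summable[OF that] by (intro sums_mult summable_sums)
    then show ?thesis
      using P[OF that] by (simp add: power_add algebra_simps sums_iff)
  qed
  have "isCont (\<lambda>y. y ^ k * (\<Sum>m. a m * y ^ m)) x" if "x \<in> {0<..<1}" for x
  proof -
    have "isCont (\<lambda>y. \<Sum>m. a m * y ^ m) x"
      using that summable[of "(x + 1) / 2"] by (intro isCont_powser[of _ "(x + 1) / 2"]) auto
    then show ?thesis
      by (intro continuous_intros)
  qed
  then have "continuous_on {0<..<1} (\<lambda>y. y ^ k * (\<Sum>m. a m * y ^ m))"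
    by (simp add: continuous_at_imp_continuous_on)
  then show ?thesis
    by (rule continuous_on_eq) (use P_eq in auto)
qed

lemma continuous_inj_on_interval_decreasing:
  fixes g :: "real \<Rightarrow> real"
  assumes cont: "continuous_on {a<..<b} g" and inj: "inj_on g {a<..<b}"
    and lim: "filterlim g at_top (at_right a)"
    and st: "a < s" "s < t" "t < b"
  shows "g t < g s"
proof (rule ccontr)
  assume "\<not> g t < g s"
  then have "g s \<le> g t" by simp
  have "eventually (\<lambda>u. g t \<le> g u \<and> u \<in> {a<..<s}) (at_right a)"
    using lim st by (intro eventually_conj eventually_at_right_real) (auto simp: filterlim_at_top)
  then obtain u where u: "g t \<le> g u" "a < u" "u < s"
    using eventually_happens'[OF trivial_limit_at_right_real] by auto
  have "continuous_on {u..s} g"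
    by (rule continuous_on_subset[OF cont]) (use u st in auto)
  then obtain v where v: "u \<le> v" "v \<le> s" "g v = g t"
    using IVT2'[of g s "g t" u] \<open>g s \<le> g t\<close> u by auto
  then have "v = t"
    using inj u st by (auto dest: inj_onD)
  with v st show False by simp
qed

lemma weighted_coefficient_sum_le_1_if_inj_on:
  fixes a :: "nat \<Rightarrow> real" and P :: "real \<Rightarrow> real"
  assumes a: "\<And>m. 0 \<le> a m"
    and P: "\<And>x. 0 < x \<Longrightarrow> x < 1 \<Longrightarrow> (\<lambda>m. a m * x ^ (m + 2)) sums P x"
    and inj: "inj_on (\<lambda>x. (1 + P x) / x) {0<..<1}"
  shows "summable (\<lambda>m. real (m + 1) * a m) \<and> (\<Sum>m. real (m + 1) * a m) \<le> 1"
proof (rule ccontr)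
  define \<psi> where "\<psi> x = (1 + P x) / x" for x
  assume "\<not> ?thesis"
  then obtain N where N: "1 < (\<Sum>m<N. real (m + 1) * a m)"
    using summableI_nonneg_bounded[of "\<lambda>m. real (m + 1) * a m" 1] suminf_le_const a
    by (metis mult_nonneg_nonneg not_le of_nat_0_le_iff)
  define Q where "Q x = (\<Sum>m<N. real (m + 1) * a m * x ^ (m + 2))" for x :: real
  have "(Q \<longlongrightarrow> Q 1) (at_left 1)"
    unfolding Q_def by (intro tendsto_intros)
  moreover have "1 < Q 1"
    using N by (simp add: Q_def)
  ultimately have "eventually (\<lambda>x. 1 < Q x \<and> x \<in> {0<..<1}) (at_left 1)"
    by (intro eventually_conj order_tendstoD(1) eventually_at_left_real) auto
  then obtain s where s: "1 < Q s" "0 < s" "s < 1"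
    using eventually_happens'[OF trivial_limit_at_left_real] by auto
  define t where "t = (s + 1) / 2"
  have t: "s < t" "t < 1"
    using s by (auto simp: t_def)
  have P_nonneg: "0 \<le> P x" if "0 < x" "x < 1" for x
    using sums_le[OF _ sums_zero P[OF that]] a that by simp
  have "t - s \<le> (t - s) * Q s"
    using s t by simp
  also have "\<dots> \<le> s * P t - t * P s"
    unfolding Q_def using s t a by (intro powser_cross_difference_ge P) auto
  finally have "\<psi> s \<le> \<psi> t"
    using s t by (simp add: \<psi>_def field_simps)
  moreover have "\<psi> t < \<psi> s"
  proof (rule continuous_inj_on_interval_decreasing[where g = \<psi>])
    show "continuous_on {0<..<1} \<psi>"
      unfolding \<psi>_def using continuous_on_shifted_powser_unit_interval[OF P]
      by (intro continuous_intros) auto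
    have "eventually (\<lambda>x. inverse x \<le> \<psi> x) (at_right 0)"
      using eventually_at_right_real[OF zero_less_one]
      by eventually_elim (use P_nonneg in \<open>auto simp: \<psi>_def field_simps\<close>)
    then show "filterlim \<psi> at_top (at_right 0)"
      by (rule filterlim_at_top_mono[OF filterlim_inverse_at_top_right])
  qed (use inj s t in \<open>simp_all add: \<psi>_def[abs_def]\<close>)
  ultimately show False by simp
qed

lemma norm_powser_diff_le:
  fixes c :: "nat \<Rightarrow> 'a::{real_normed_field,banach}"
  assumes summable: "summable (\<lambda>m. real (m + 1) * norm (c m))"
    and zw: "norm z \<le> 1" "norm w \<le> 1"
    and g: "(\<lambda>m. c m * z ^ (m + 1)) sums g" and h: "(\<lambda>m. c m * w ^ (m + 1)) sums h"
  shows "norm (g - h) \<le> (\<Sum>m. real (m + 1) * norm (c m)) * norm (z - w)"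
proof -
  have diff: "(\<lambda>m. c m * (z ^ (m + 1) - w ^ (m + 1))) sums (g - h)"
    using sums_diff[OF g h] by (simp add: right_diff_distrib)
  have bound: "norm (c m * (z ^ (m + 1) - w ^ (m + 1))) \<le> real (m + 1) * norm (c m) * norm (z - w)"
    for m
  proof -
    have "norm (c m * (z ^ (m + 1) - w ^ (m + 1))) = norm (c m) * norm (z ^ (m + 1) - w ^ (m + 1))"
      by (rule norm_mult)
    also have "\<dots> \<le> norm (c m) * (real (m + 1) * norm (z - w))"
      using norm_power_diff[OF zw] by (rule mult_left_mono) simp
    finally show ?thesis
      by (simp only: mult_ac)
  qed
  have "norm (\<Sum>m. c m * (z ^ (m + 1) - w ^ (m + 1)))
      \<le> (\<Sum>m. real (m + 1) * norm (c m) * norm (z - w))"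
    by (rule norm_suminf_le) (use bound summable_mult2[OF summable] in auto)
  then have "norm (g - h) \<le> (\<Sum>m. real (m + 1) * norm (c m) * norm (z - w))"
    using sums_unique[OF diff] by simp
  also have "\<dots> = (\<Sum>m. real (m + 1) * norm (c m)) * norm (z - w)"
    using suminf_mult2[OF summable] by simp
  finally show ?thesis .
qed

lemma inj_on_ball_if_weighted_coefficient_sum_le_1:
  fixes f :: "complex \<Rightarrow> complex" and \<beta> :: complex and c :: "nat \<Rightarrow> complex"
  assumes f0: "f 0 = 0" and nz: "\<And>z. z \<in> ball 0 1 \<Longrightarrow> z \<noteq> 0 \<Longrightarrow> f z \<noteq> 0"
    and ser: "\<And>z. z \<in> ball 0 1 \<Longrightarrow> z \<noteq> 0 \<Longrightarrow>
      (\<lambda>m. c m * z ^ (m + 2)) sums (z / f z - 1 - \<beta> * z)"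
    and summable: "summable (\<lambda>m. real (m + 1) * norm (c m))"
    and le: "(\<Sum>m. real (m + 1) * norm (c m)) \<le> 1"
  shows "inj_on f (ball 0 1)"
proof (rule inj_onI, rule ccontr)
  fix z w
  assume z: "z \<in> ball 0 1" and w: "w \<in> ball 0 1" and eq: "f z = f w" and "z \<noteq> w"
  then have "z \<noteq> 0" "w \<noteq> 0"
    using f0 nz by metis+
  have recip: "(\<lambda>m. c m * u ^ (m + 1)) sums (1 / f u - 1 / u - \<beta>)"
    if "u \<in> ball 0 1" "u \<noteq> 0" for u
  proof -
    have "(\<lambda>m. c m * u ^ (m + 2) / u) sums ((u / f u - 1 - \<beta> * u) / u)"
      using ser[OF that] by (rule sums_divide)
    then show ?thesis
      using that nz[OF that] by (simp add: field_simps)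
  qed
  have "norm (1 / w - 1 / z) \<le> (\<Sum>m. real (m + 1) * norm (c m)) * norm (z - w)"
    using norm_powser_diff_le[OF summable _ _ recip[OF z] recip[OF w]]
      \<open>z \<noteq> 0\<close> \<open>w \<noteq> 0\<close> z w eq by (simp add: algebra_simps)
  also have "\<dots> \<le> norm (z - w)"
    using mult_right_mono[OF le norm_ge_zero] by simp
  also have "\<dots> < norm (z - w) / (norm z * norm w)"
  proof -
    have "norm z < 1" "norm w < 1"
      using z w by auto
    then have "norm z * norm w < 1 * 1"
      by (intro mult_strict_mono') auto
    then have "norm (z - w) * (norm z * norm w) < norm (z - w) * 1"
      using \<open>z \<noteq> w\<close> by (intro mult_strict_left_mono) auto
    then show ?thesis
      using \<open>z \<noteq> 0\<close> \<open>w \<noteq> 0\<close> by (simp add: less_divide_eq)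
  qed
  also have "\<dots> = norm (1 / w - 1 / z)"
    using \<open>z \<noteq> 0\<close> \<open>w \<noteq> 0\<close> by (simp add: field_simps norm_divide norm_mult)
  finally show False by simp
qed

lemma weighted_coefficient_sum_le_1_if_inj_on_ball:
  fixes f :: "complex \<Rightarrow> complex" and \<beta> :: complex and a :: "nat \<Rightarrow> real"
  assumes inj: "inj_on f (ball 0 1)" and nz: "\<And>z. z \<in> ball 0 1 \<Longrightarrow> z \<noteq> 0 \<Longrightarrow> f z \<noteq> 0"
    and a: "\<And>m. 0 \<le> a m"
    and ser: "\<And>z. z \<in> ball 0 1 \<Longrightarrow> z \<noteq> 0 \<Longrightarrow>
      (\<lambda>m. (-1) ^ (m + 2) * complex_of_real (a m) * z ^ (m + 2)) sums (z / f z - 1 - \<beta> * z)"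
  shows "summable (\<lambda>m. real (m + 1) * a m) \<and> (\<Sum>m. real (m + 1) * a m) \<le> 1"
proof -
  define F where "F x = - of_real x / f (- of_real x) - 1 + \<beta> * of_real x" for x :: real
  have F_sums: "(\<lambda>m. complex_of_real (a m * x ^ (m + 2))) sums F x" if "0 < x" "x < 1" for x
  proof -
    have "(\<lambda>m. (-1) ^ (m + 2) * complex_of_real (a m) * (- of_real x) ^ (m + 2))
        = (\<lambda>m. complex_of_real (a m * x ^ (m + 2)))"
    proof
      fix m
      have "(-1) ^ (m + 2) * (- complex_of_real x) ^ (m + 2) = of_real x ^ (m + 2)"
        by (subst power_mult_distrib[symmetric]) simp
      then show "(-1) ^ (m + 2) * complex_of_real (a m) * (- of_real x) ^ (m + 2)
          = complex_of_real (a m * x ^ (m + 2))"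
        by (metis mult.assoc mult.left_commute of_real_mult of_real_power)
    qed
    moreover have "F x = - of_real x / f (- of_real x) - 1 - \<beta> * (- of_real x)"
      by (simp add: F_def)
    ultimately show ?thesis
      using ser[of "- of_real x"] that by simp
  qed
  define P where "P x = Re (F x)" for x
  have P_sums: "(\<lambda>m. a m * x ^ (m + 2)) sums P x" if "0 < x" "x < 1" for x
    using sums_Re[OF F_sums[OF that]] by (simp add: P_def)
  have \<psi>_eq: "complex_of_real ((1 + P x) / x) = \<beta> - 1 / f (- of_real x)"
    if "0 < x" "x < 1" for x
  proof -
    have "F x = of_real (P x)"
      using sums_unique2[OF F_sums[OF that] sums_of_real[OF P_sums[OF that]]] .
    then have "complex_of_real ((1 + P x) / x) = (1 + F x) / of_real x"
      by simp
    also have "\<dots> = (\<beta> * of_real x - of_real x / f (- of_real x)) / of_real x"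
      by (simp add: F_def)
    also have "\<dots> = \<beta> - 1 / f (- of_real x)"
      using that by (simp add: diff_divide_distrib)
    finally show ?thesis .
  qed
  have "inj_on (\<lambda>x. (1 + P x) / x) {0<..<1}"
  proof (rule inj_onI)
    fix x y :: real
    assume x: "x \<in> {0<..<1}" and y: "y \<in> {0<..<1}" and "(1 + P x) / x = (1 + P y) / y"
    then have "f (- of_real x) = f (- of_real y)"
      using \<psi>_eq[of x] \<psi>_eq[of y] by auto
    then have "- complex_of_real x = - of_real y"
      by (rule inj_onD[OF inj]) (use x y in auto)
    then show "x = y" by simp
  qed
  then show ?thesis
    using weighted_coefficient_sum_le_1_if_inj_on[OF a P_sums] by blast
qed

theorem theorem5p1:
  fixes f :: "complex \<Rightarrow> complex" and b1 :: complex and b :: "nat \<Rightarrow> real"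
  assumes "class_A f"
    and "\<And>z. z \<in> ball 0 1 \<Longrightarrow> z \<noteq> 0 \<Longrightarrow> f z \<noteq> 0"
    and "\<And>n. n \<ge> 2 \<Longrightarrow> b n \<ge> 0"
    and "\<And>z. z \<in> ball 0 1 \<Longrightarrow> z \<noteq> 0 \<Longrightarrow>
           (\<lambda>m. (-1) ^ (m + 2) * complex_of_real (b (m + 2)) * z ^ (m + 2))
             sums (z / f z - 1 - b1 * z)"
  shows "inj_on f (ball 0 1) \<longleftrightarrow>
           (summable (\<lambda>m. real (m + 1) * b (m + 2)) \<and>
            (\<Sum>m. real (m + 1) * b (m + 2)) \<le> 1)"
proof
  have b_nonneg: "0 \<le> b (m + 2)" for m
    using assms(3) by simp
  show "summable (\<lambda>m. real (m + 1) * b (m + 2)) \<and> (\<Sum>m. real (m + 1) * b (m + 2)) \<le> 1"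
    if "inj_on f (ball 0 1)"
    using weighted_coefficient_sum_le_1_if_inj_on_ball[OF that assms(2) b_nonneg assms(4)] .
  define c where "c m = (-1) ^ (m + 2) * complex_of_real (b (m + 2))" for m
  have norm_c: "norm (c m) = b (m + 2)" for m
    using b_nonneg by (simp add: c_def norm_mult norm_power)
  show "inj_on f (ball 0 1)"
    if "summable (\<lambda>m. real (m + 1) * b (m + 2)) \<and> (\<Sum>m. real (m + 1) * b (m + 2)) \<le> 1"
  proof (rule inj_on_ball_if_weighted_coefficient_sum_le_1)
    show "f 0 = 0"
      using assms(1) by (simp add: class_A_def)
    show "(\<lambda>m. c m * z ^ (m + 2)) sums (z / f z - 1 - b1 * z)"
      if "z \<in> ball 0 1" "z \<noteq> 0" for z
      unfolding c_def using assms(4)[OF that] .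
    show "summable (\<lambda>m. real (m + 1) * norm (c m))" "(\<Sum>m. real (m + 1) * norm (c m)) \<le> 1"
      using that by (simp_all only: norm_c)
  qed (use assms(2) in auto)
qed

end
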